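(* Let $\alpha>2$, let $i\in\{1,2\}$ and let $j$ be the other index. Fix $\Lambda_j>0$. Then the function \[ \Lambda_i\mapsto U_i(\Lambda_1,\Lambda_2)=\Lambda_i\int_0^\infty e^{-(\Lambda_1+\Lambda_2)x^{2/\alpha}}\frac{dx}{1+x},\qquad \Lambda_i>0, \] is smooth and continuous and has a unique maximum point $\Lambda_i^*$. *)

theory Defs
  imports "HOL-Analysis.Analysis"
begin

definition U :: "real \<Rightarrow> nat \<Rightarrow> real \<Rightarrow> real \<Rightarrow> real" where
  "U \<alpha> i L1 L2 = (if i = 1 then L1 else L2) *
     integral {0..} (\<lambda>x::real. exp (- (L1 + L2) * x powr (2 / \<alpha>)) / (1 + x))"

definition smooth_on_real :: "real set \<Rightarrow> (real \<Rightarrow> real) \<Rightarrow> bool" where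
  "smooth_on_real S f \<longleftrightarrow>
     (\<exists>D :: nat \<Rightarrow> real \<Rightarrow> real. D 0 = f \<and>
        (\<forall>n. \<forall>x\<in>S. (D n has_real_derivative D (Suc n) x) (at x)))"

end

theory Submission
  imports Defs "HOL-Real_Asymp.Real_Asymp"
begin

text \<open>With b = 2/\<alpha> \<in> (0,1) and c = L_j the function is f(L) = L I_0(L + c), where
  I_n(s) = \<integral>(0,\<infinity>) (x^b)^n e^(-s x^b) dx/(1+x). Differentiation under the integral gives
  I_n' = -I_(n+1), so f is smooth. Since f > 0 and f tends to 0 at 0 and at \<infinity>, it attains its
  maximum. Integration by parts gives s b I_1(s) = J(s) := \<integral>(0,\<infinity>) e^(-s x^b) dx/(1+x)^2, hence
  f'(L) = \<integral>(0,\<infinity>) e^(-s x^b) (1 + x - k) dx/(1+x)^2 with s = L + c and k = L/(b s) increasing in L.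
  The integrand changes sign only once, and increasing L multiplies it by a weight decreasing in x
  while increasing k; so once f' \<le> 0 it stays strictly negative, and the maximum point is unique.\<close>

text \<open>moment b n s is I_n(s) and sq_moment b s is J(s); for \<alpha> > 2 one has
  U \<alpha> i L1 L2 = L_i * moment (2/\<alpha>) 0 (L1 + L2).\<close>

definition moment_integrand :: "real \<Rightarrow> nat \<Rightarrow> real \<Rightarrow> real \<Rightarrow> real" where
  "moment_integrand b n s x = (x powr b) ^ n * (exp (- s * x powr b) / (1 + x))"

definition moment :: "real \<Rightarrow> nat \<Rightarrow> real \<Rightarrow> real" where
  "moment b n s = integral {0..} (moment_integrand b n s)"

definition sq_integrand :: "real \<Rightarrow> real \<Rightarrow> real \<Rightarrow> real" where
  "sq_integrand b s x = exp (- s * x powr b) / (1 + x)^2"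

definition sq_moment :: "real \<Rightarrow> real \<Rightarrow> real" where
  "sq_moment b s = integral {0..} (sq_integrand b s)"

lemma bounded_above_if_tendsto_at_top:
  fixes f :: "real \<Rightarrow> real"
  assumes "continuous_on {a..} f" and "(f \<longlongrightarrow> l) at_top"
  shows "\<exists>C. \<forall>x\<ge>a. f x \<le> C"
proof -
  obtain B where B: "\<And>x. B \<le> x \<Longrightarrow> f x < l + 1"
    using order_tendstoD(2)[OF assms(2), of "l + 1"] by (auto simp: eventually_at_top_linorder)
  have "continuous_on {a..max a B} f"
    using assms(1) by (rule continuous_on_subset) auto
  then obtain m where m: "\<forall>x\<in>{a..max a B}. f x \<le> f m"
    using continuous_attains_sup[of "{a..max a B}" f] by fastforce
  have "f x \<le> max (f m) (l + 1)" if "a \<le> x" for x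
    using B[of x] m that by (cases "x \<le> max a B") (auto simp: le_max_iff_disj)
  then show ?thesis by blast
qed

lemma inverse_square_has_integral: "((\<lambda>x::real. 1 / (1 + x)^2) has_integral 1) {0..}"
proof (rule has_integral_to_inf)
  show "(\<lambda>x::real. 1 / (1 + x)^2) integrable_on {0..y}" for y
    by (intro integrable_continuous_interval continuous_intros) auto
  have "((\<lambda>x::real. 1 / (1 + x)^2) has_integral (- 1 / (1 + y) - (- 1 / (1 + 0)))) {0..y}"
    if "0 \<le> y" for y :: real
    using that
    by (intro fundamental_theorem_of_calculus)
       (auto intro!: derivative_eq_intros simp flip: has_real_derivative_iff_has_vector_derivative
             simp: power2_eq_square field_simps)
  then have "\<forall>\<^sub>F y in at_top. integral {0..y} (\<lambda>x::real. 1 / (1 + x)^2) = 1 - 1 / (1 + y)"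
    by (intro eventually_at_top_linorderI[of 0]) (auto dest: integral_unique)
  moreover have "((\<lambda>y::real. 1 - 1 / (1 + y)) \<longlongrightarrow> 1) at_top"
    by real_asymp
  ultimately show "((\<lambda>y. integral {0..y} (\<lambda>x::real. 1 / (1 + x)^2)) \<longlongrightarrow> 1) at_top"
    by (simp add: filterlim_cong)
qed auto

lemma absolutely_integrable_if_inverse_square_bound:
  fixes f :: "real \<Rightarrow> real"
  assumes "continuous_on {0..} f" and "\<And>x. 0 \<le> x \<Longrightarrow> \<bar>f x\<bar> \<le> C / (1 + x)^2"
  shows "f absolutely_integrable_on {0..}"
proof (rule measurable_bounded_by_integrable_imp_absolutely_integrable)
  show "(\<lambda>x. C / (1 + x)^2) integrable_on {0..}"
    using integrable_on_cmult_left[OF has_integral_integrable[OF inverse_square_has_integral]]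
    by simp
qed (use assms in \<open>auto intro: continuous_imp_measurable_on_sets_lebesgue\<close>)

lemma moment_integrand_nonneg: "0 \<le> x \<Longrightarrow> 0 \<le> moment_integrand b n s x"
  unfolding moment_integrand_def by simp

lemma sq_integrand_nonneg: "0 \<le> x \<Longrightarrow> 0 \<le> sq_integrand b s x"
  unfolding sq_integrand_def by simp

lemma sq_integrand_le_moment_integrand:
  assumes "0 \<le> x"
  shows "sq_integrand b s x \<le> moment_integrand b 0 s x"
proof -
  have "1 / (1 + x)^2 \<le> 1 / (1 + x)"
    using assms by (intro divide_left_mono) (auto simp: power2_eq_square)
  from mult_left_mono[OF this, of "exp (- s * x powr b)"] show ?thesis
    unfolding sq_integrand_def moment_integrand_def by simp
qed

lemma moment_integrand_continuous: "0 < b \<Longrightarrow> continuous_on {0..} (moment_integrand b n s)"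
  unfolding moment_integrand_def by (intro continuous_intros continuous_on_powr') auto

lemma sq_integrand_continuous: "0 < b \<Longrightarrow> continuous_on {0..} (sq_integrand b s)"
  unfolding sq_integrand_def by (intro continuous_intros continuous_on_powr') auto

lemma moment_integrand_decay:
  assumes "0 < b" and "0 < s"
  shows "\<exists>C. \<forall>x\<ge>0. moment_integrand b n s x \<le> C / (1 + x)^2"
proof -
  have "continuous_on {0..} (\<lambda>x. moment_integrand b n s x * (1 + x)^2)"
    using moment_integrand_continuous[OF assms(1)] by (intro continuous_intros)
  moreover have "((\<lambda>x. moment_integrand b n s x * (1 + x)^2) \<longlongrightarrow> 0) at_top"
    unfolding moment_integrand_def using assms by real_asymp
  ultimately obtain C where "\<forall>x\<ge>0. moment_integrand b n s x * (1 + x)^2 \<le> C"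
    using bounded_above_if_tendsto_at_top by blast
  then have "\<forall>x\<ge>0. moment_integrand b n s x \<le> C / (1 + x)^2"
    by (simp add: pos_le_divide_eq add_pos_nonneg)
  then show ?thesis ..
qed

lemma moment_integrand_absolutely_integrable:
  assumes "0 < b" and "0 < s"
  shows "moment_integrand b n s absolutely_integrable_on {0..}"
proof -
  obtain C where C: "\<forall>x\<ge>0. moment_integrand b n s x \<le> C / (1 + x)^2"
    using moment_integrand_decay[OF assms] by blast
  show ?thesis
  proof (rule absolutely_integrable_if_inverse_square_bound)
    show "\<bar>moment_integrand b n s x\<bar> \<le> C / (1 + x)^2" if "0 \<le> x" for x
      using C that moment_integrand_nonneg[OF that] by simp
  qed (rule moment_integrand_continuous[OF assms(1)])
qed

lemma sq_integrand_absolutely_integrable: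
  assumes "0 < b" and "0 < s"
  shows "sq_integrand b s absolutely_integrable_on {0..}"
proof -
  obtain C where C: "\<forall>x\<ge>0. moment_integrand b 0 s x \<le> C / (1 + x)^2"
    using moment_integrand_decay[OF assms] by blast
  show ?thesis
  proof (rule absolutely_integrable_if_inverse_square_bound)
    show "\<bar>sq_integrand b s x\<bar> \<le> C / (1 + x)^2" if "0 \<le> x" for x
      using C that sq_integrand_nonneg[OF that] sq_integrand_le_moment_integrand[OF that, of b s]
      by fastforce
  qed (rule sq_integrand_continuous[OF assms(1)])
qed

lemma moment_integrand_integrable: "0 < b \<Longrightarrow> 0 < s \<Longrightarrow> moment_integrand b n s integrable_on {0..}"
  using moment_integrand_absolutely_integrable set_lebesgue_integral_eq_integral(1) by blast

lemma sq_integrand_integrable: "0 < b \<Longrightarrow> 0 < s \<Longrightarrow> sq_integrand b s integrable_on {0..}"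
  using sq_integrand_absolutely_integrable set_lebesgue_integral_eq_integral(1) by blast

lemma abs_exp_minus_one_minus_le: "\<bar>exp z - 1 - z\<bar> \<le> z^2 / 2 * exp \<bar>z\<bar>" for z :: real
proof -
  obtain t where t: "\<bar>t\<bar> \<le> \<bar>z\<bar>" "exp z = (\<Sum>m<2. z ^ m / fact m) + exp t / fact 2 * z^2"
    using Maclaurin_exp_le[of z 2] by blast
  then have "\<bar>exp z - 1 - z\<bar> = exp t / 2 * z^2"
    by (simp add: numeral_2_eq_2)
  also have "\<dots> \<le> z^2 / 2 * exp \<bar>z\<bar>"
    using t(1) by (simp add: mult_right_mono mult.commute)
  finally show ?thesis .
qed

lemma moment_integrand_taylor:
  assumes x: "0 \<le> x" and s: "0 < s" and h: "\<bar>h\<bar> \<le> s / 2"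
  shows "\<bar>moment_integrand b n (s + h) x - moment_integrand b n s x + h * moment_integrand b (Suc n) s x\<bar>
    \<le> h^2 / 2 * moment_integrand b (Suc (Suc n)) (s / 2) x"
proof -
  define u where "u = x powr b"
  define w where "w = 1 / (1 + x)"
  have u: "0 \<le> u" and w: "0 \<le> w"
    using x by (auto simp: u_def w_def)
  have "moment_integrand b n (s + h) x - moment_integrand b n s x + h * moment_integrand b (Suc n) s x
      = u^n * w * exp (- s * u) * (exp (- h * u) - 1 - (- h * u))"
  proof -
    have "exp (- (s + h) * u) = exp (- s * u) * exp (- h * u)"
      by (simp add: exp_add[symmetric] algebra_simps)
    then show ?thesis
      unfolding moment_integrand_def u_def[symmetric] w_def
      by (simp add: algebra_simps diff_divide_distrib add_divide_distrib)
  qed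
  also have "\<bar>\<dots>\<bar> = u^n * w * exp (- s * u) * \<bar>exp (- h * u) - 1 - (- h * u)\<bar>"
    using u w by (simp add: abs_mult)
  also have "\<dots> \<le> u^n * w * exp (- s * u) * ((- h * u)^2 / 2 * exp \<bar>- h * u\<bar>)"
    using u w by (intro mult_left_mono abs_exp_minus_one_minus_le) auto
  also have "\<dots> = h^2 / 2 * (u^(Suc (Suc n)) * w * exp (- s * u + \<bar>h\<bar> * u))"
    using u exp_add[of "- s * u" "\<bar>h\<bar> * u"] by (simp add: power2_eq_square abs_mult mult_ac)
  also have "\<dots> \<le> h^2 / 2 * (u^(Suc (Suc n)) * w * exp (- (s / 2) * u))"
  proof -
    have "\<bar>h\<bar> * u \<le> s / 2 * u"
      using h u by (rule mult_right_mono)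
    then show ?thesis
      using u w by (intro mult_left_mono) (auto simp: algebra_simps)
  qed
  also have "\<dots> = h^2 / 2 * moment_integrand b (Suc (Suc n)) (s / 2) x"
    unfolding moment_integrand_def u_def[symmetric] w_def by simp
  finally show ?thesis .
qed

lemma moment_difference_quotient_bound:
  assumes b: "0 < b" and s: "0 < s" and h: "h \<noteq> 0" "\<bar>h\<bar> < s / 2"
  shows "\<bar>(moment b n (s + h) - moment b n s) / h + moment b (Suc n) s\<bar>
    \<le> \<bar>h\<bar> / 2 * moment b (Suc (Suc n)) (s / 2)"
proof -
  define R where "R x = moment_integrand b n (s + h) x - moment_integrand b n s x
    + h * moment_integrand b (Suc n) s x" for x
  have sh: "0 < s + h" and s2: "0 < s / 2"
    using s h by auto
  note integrable = moment_integrand_integrable[OF b]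
  have R_integrable: "R integrable_on {0..}"
    unfolding R_def using integrable[OF sh] integrable[OF s] integrable_on_cmult_left[OF integrable[OF s]]
    by (intro integrable_add integrable_diff) auto
  have "integral {0..} R = moment b n (s + h) - moment b n s + h * moment b (Suc n) s"
    unfolding R_def moment_def
    using integrable[OF sh] integrable[OF s] integrable_on_cmult_left[OF integrable[OF s]]
    by (simp add: integral_add integral_diff integrable_diff)
  moreover have "\<bar>integral {0..} R\<bar> \<le> h^2 / 2 * moment b (Suc (Suc n)) (s / 2)"
  proof -
    have "norm (integral {0..} R)
        \<le> integral {0..} (\<lambda>x. h^2 / 2 * moment_integrand b (Suc (Suc n)) (s / 2) x)"
      using R_integrable integrable_on_cmult_left[OF integrable[OF s2]]
        moment_integrand_taylor[OF _ s, of _ h b n] h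
      by (intro integral_norm_bound_integral) (auto simp: R_def)
    then show ?thesis
      by (simp add: moment_def)
  qed
  ultimately have "\<bar>moment b n (s + h) - moment b n s + h * moment b (Suc n) s\<bar> / \<bar>h\<bar>
      \<le> \<bar>h\<bar> / 2 * moment b (Suc (Suc n)) (s / 2)"
    using h by (simp add: divide_le_eq power2_eq_square mult_ac)
  moreover have "(moment b n (s + h) - moment b n s) / h + moment b (Suc n) s
      = (moment b n (s + h) - moment b n s + h * moment b (Suc n) s) / h"
    using h by (simp add: field_simps)
  ultimately show ?thesis
    by (simp add: abs_divide)
qed

lemma moment_has_derivative:
  assumes b: "0 < b" and s: "0 < s"
  shows "(moment b n has_real_derivative - moment b (Suc n) s) (at s)"
  unfolding DERIV_def
proof -
  define M where "M = moment b (Suc (Suc n)) (s / 2)"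
  have "\<forall>\<^sub>F h in at 0. norm ((moment b n (s + h) - moment b n s) / h - - moment b (Suc n) s)
      \<le> \<bar>h\<bar> / 2 * M"
    unfolding eventually_at M_def using s moment_difference_quotient_bound[OF b s]
    by (intro exI[of _ "s / 2"]) auto
  moreover have "((\<lambda>h. \<bar>h\<bar> / 2 * M) \<longlongrightarrow> 0) (at (0::real))"
    by (rule tendsto_eq_intros refl | simp)+
  ultimately have "((\<lambda>h. (moment b n (s + h) - moment b n s) / h - - moment b (Suc n) s)
      \<longlongrightarrow> 0) (at 0)"
    by (rule Lim_null_comparison)
  then show "((\<lambda>h. (moment b n (s + h) - moment b n s) / h) \<longlongrightarrow> - moment b (Suc n) s) (at 0)"
    using LIM_zero_iff[where f = "\<lambda>h. (moment b n (s + h) - moment b n s) / h"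
        and l = "- moment b (Suc n) s"] by simp
qed

lemma integral_atLeast_eq_tendsto:
  fixes g F :: "real \<Rightarrow> real"
  assumes g: "g absolutely_integrable_on {a..}"
    and F: "\<And>y. a \<le> y \<Longrightarrow> (g has_integral F y) {a..y}"
    and lim: "(F \<longlongrightarrow> l) at_top"
  shows "integral {a..} g = l"
proof -
  define G where "G k x = (if x \<in> {a..a + real k} then g x else 0)" for k x
  have G: "(G k has_integral F (a + real k)) {a..}" for k
    unfolding G_def has_integral_restrict_Int using F[of "a + real k"] by (simp add: Int_absorb2)
  have "(\<lambda>k. integral {a..} (G k)) \<longlonglongrightarrow> integral {a..} g"
  proof (rule dominated_convergence(2))
    show "G k integrable_on {a..}" for k
      using G by blast
    show "(\<lambda>x. \<bar>g x\<bar>) integrable_on {a..}"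
      using g by (simp add: absolutely_integrable_on_def)
    show "norm (G k x) \<le> \<bar>g x\<bar>" for k x
      by (simp add: G_def)
    show "(\<lambda>k. G k x) \<longlonglongrightarrow> g x" if "x \<in> {a..}" for x
    proof (rule tendsto_eventually)
      show "\<forall>\<^sub>F k in sequentially. G k x = g x"
        using that by (intro eventually_sequentiallyI[of "nat \<lceil>x - a\<rceil>"])
          (auto simp: G_def intro: order_trans[OF real_nat_ceiling_ge])
    qed
  qed
  moreover have "(\<lambda>k. integral {a..} (G k)) \<longlonglongrightarrow> l"
  proof -
    have "filterlim (\<lambda>k. a + real k) at_top sequentially"
      by (intro filterlim_tendsto_add_at_top[OF tendsto_const] filterlim_real_sequentially)
    then have "(\<lambda>k. F (a + real k)) \<longlonglongrightarrow> l"
      by (rule filterlim_compose[OF lim])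
    moreover have "integral {a..} (G k) = F (a + real k)" for k
      using G by (rule integral_unique)
    ultimately show ?thesis
      by simp
  qed
  ultimately show ?thesis
    using LIMSEQ_unique by blast
qed

lemma has_real_derivative_frac_mult_exp:
  assumes b: "0 < b" and x: "0 < x"
  shows "((\<lambda>x. x / (1 + x) * exp (- s * x powr b)) has_real_derivative
    sq_integrand b s x - s * b * moment_integrand b 1 s x) (at x)"
proof -
  define E where "E = exp (- s * x powr b)"
  have "((\<lambda>x. x / (1 + x)) has_real_derivative 1 / (1 + x)^2) (at x)"
    using x by (auto intro!: derivative_eq_intros simp: power2_eq_square field_simps)
  moreover have "((\<lambda>x. exp (- s * x powr b)) has_real_derivative E * (- s * (b * x powr (b - 1)))) (at x)"
    unfolding E_def using x by (auto intro!: derivative_eq_intros)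
  ultimately have "((\<lambda>x. x / (1 + x) * exp (- s * x powr b)) has_real_derivative
      1 / (1 + x)^2 * E + E * (- s * (b * x powr (b - 1))) * (x / (1 + x))) (at x)"
    unfolding E_def by (rule DERIV_mult)
  moreover have "x * x powr (b - 1) = x powr b"
    using x by (simp add: powr_diff field_simps)
  then have "1 / (1 + x)^2 * E + E * (- s * (b * x powr (b - 1))) * (x / (1 + x))
      = sq_integrand b s x - s * b * moment_integrand b 1 s x"
    unfolding sq_integrand_def moment_integrand_def E_def[symmetric] using x
    by (simp add: divide_simps) (simp add: algebra_simps)
  ultimately show ?thesis
    by simp
qed

lemma sq_moment_eq_moment1:
  assumes b: "0 < b" and s: "0 < s"
  shows "sq_moment b s = s * b * moment b 1 s"
proof -
  define g where "g x = sq_integrand b s x - s * b * moment_integrand b 1 s x" for x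
  define F where "F y = y / (1 + y) * exp (- s * y powr b)" for y
  have g_abs_integrable: "g absolutely_integrable_on {0..}"
    unfolding g_def using sq_integrand_absolutely_integrable[OF b s]
      moment_integrand_absolutely_integrable[OF b s, of 1]
    by (intro set_integral_diff(1) set_integrable_mult_right) auto
  have "(g has_integral F y) {0..y}" if "0 \<le> y" for y
  proof -
    have "(g has_integral F y - F 0) {0..y}"
    proof (rule fundamental_theorem_of_calculus_interior[OF that])
      show "continuous_on {0..y} F"
        unfolding F_def using b by (intro continuous_intros continuous_on_powr') auto
      show "(F has_vector_derivative g x) (at x)" if "x \<in> {0<..<y}" for x
        using has_real_derivative_frac_mult_exp[OF b, of x s] that unfolding F_def g_def
        by (simp add: has_real_derivative_iff_has_vector_derivative)
    qed
    then show ?thesis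
      by (simp add: F_def)
  qed
  moreover have "(F \<longlongrightarrow> 0) at_top"
    unfolding F_def using s b by real_asymp
  ultimately have "integral {0..} g = 0"
    by (rule integral_atLeast_eq_tendsto[OF g_abs_integrable])
  moreover have "integral {0..} g = sq_moment b s - s * b * moment b 1 s"
    unfolding g_def sq_moment_def moment_def
    using sq_integrand_integrable[OF b s]
      integrable_on_cmult_left[OF moment_integrand_integrable[OF b s, of 1], of "s * b"]
    by (simp add: integral_diff)
  ultimately show ?thesis
    by simp
qed

lemma sq_moment_pos:
  assumes b: "0 < b" and s: "0 < s"
  shows "0 < sq_moment b s"
proof -
  have cont: "continuous_on {0..1} (sq_integrand b s)"
    using sq_integrand_continuous[OF b] by (rule continuous_on_subset) auto
  have lower: "exp (- s) / 4 \<le> sq_integrand b s x" if "x \<in> {0..1}" for x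
  proof -
    have "x powr b \<le> 1"
      using that b by (intro powr_le1) auto
    then have "exp (- s) \<le> exp (- s * x powr b)"
      using s by (simp add: mult_left_le)
    moreover have "(1 + x)^2 \<le> 2^2"
      using that by (intro power_mono) auto
    ultimately show ?thesis
      unfolding sq_integrand_def using that by (intro frac_le) auto
  qed
  have "0 < exp (- s) / 4"
    by simp
  also have "\<dots> = integral {0..1::real} (\<lambda>x. exp (- s) / 4)"
    by simp
  also have "\<dots> \<le> integral {0..1} (sq_integrand b s)"
    using lower cont by (intro integral_le integrable_continuous_interval) auto
  also have "\<dots> \<le> sq_moment b s"
    unfolding sq_moment_def using sq_integrand_integrable[OF b s] cont sq_integrand_nonneg
    by (intro integral_subset_le) (auto intro: integrable_continuous_interval)
  finally show ?thesis .
qed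

lemma sq_moment_le_moment0:
  assumes "0 < b" and "0 < s"
  shows "sq_moment b s \<le> moment b 0 s"
  unfolding sq_moment_def moment_def
  using sq_integrand_integrable[OF assms] moment_integrand_integrable[OF assms]
    sq_integrand_le_moment_integrand
  by (intro integral_le) auto

lemma moment_nonneg: "0 < b \<Longrightarrow> 0 < s \<Longrightarrow> 0 \<le> moment b n s"
  unfolding moment_def
  by (intro integral_nonneg moment_integrand_integrable) (auto simp: moment_integrand_nonneg)

lemma moment_antimono:
  assumes b: "0 < b" and s: "0 < s" "s \<le> s'"
  shows "moment b n s' \<le> moment b n s"
  unfolding moment_def
proof (rule integral_le)
  show "moment_integrand b n s' integrable_on {0..}"
    using s by (intro moment_integrand_integrable[OF b]) auto
  show "moment_integrand b n s integrable_on {0..}"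
    using s by (intro moment_integrand_integrable[OF b]) auto
  show "moment_integrand b n s' x \<le> moment_integrand b n s x" if "x \<in> {0..}" for x
  proof -
    have "exp (- s' * x powr b) \<le> exp (- s * x powr b)"
      using s by (simp add: mult_right_mono)
    then show ?thesis
      using that unfolding moment_integrand_def by (intro mult_left_mono divide_right_mono) auto
  qed
qed

text \<open>The m-th derivative of L \<mapsto> L * moment b 0 (L + c), by Leibniz's rule; for m = 0 the
  junk value moment b (0 - 1) is multiplied by 0.\<close>

definition utility_deriv :: "real \<Rightarrow> real \<Rightarrow> nat \<Rightarrow> real \<Rightarrow> real" where
  "utility_deriv b c m L = (-1)^m * (L * moment b m (L + c) - real m * moment b (m - 1) (L + c))"

lemma utility_deriv_0: "utility_deriv b c 0 L = L * moment b 0 (L + c)"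
  by (simp add: utility_deriv_def)

lemma utility_deriv_1: "utility_deriv b c 1 L = moment b 0 (L + c) - L * moment b 1 (L + c)"
  by (simp add: utility_deriv_def)

lemma utility_deriv_has_derivative:
  assumes b: "0 < b" and L: "0 < L + c"
  shows "(utility_deriv b c m has_real_derivative utility_deriv b c (Suc m) L) (at L)"
proof -
  have "((\<lambda>L. L + c) has_real_derivative 1) (at L)"
    by (auto intro!: derivative_eq_intros)
  from DERIV_chain2[OF moment_has_derivative[OF b L] this]
  have moment_shift: "((\<lambda>L. moment b k (L + c)) has_real_derivative - moment b (Suc k) (L + c)) (at L)"
    for k
    by simp
  have "(utility_deriv b c m has_real_derivative
      (-1)^m * ((1 * moment b m (L + c) + (- moment b (Suc m) (L + c)) * L)
        - real m * (- moment b (Suc (m - 1)) (L + c)))) (at L)"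
    unfolding utility_deriv_def
    by (intro DERIV_cmult DERIV_diff DERIV_mult DERIV_ident moment_shift)
  moreover have "(-1)^m * ((1 * moment b m (L + c) + (- moment b (Suc m) (L + c)) * L)
      - real m * (- moment b (Suc (m - 1)) (L + c))) = utility_deriv b c (Suc m) L"
    unfolding utility_deriv_def by (cases m) (auto simp: algebra_simps)
  ultimately show ?thesis
    by simp
qed

lemma integral_mult_le_at_sign_change:
  fixes \<phi> w :: "real \<Rightarrow> real"
  assumes "\<phi> integrable_on S" and "(\<lambda>x. w x * \<phi> x) integrable_on S"
    and "\<And>x. x \<in> S \<Longrightarrow> x < t \<Longrightarrow> \<phi> x \<le> 0 \<and> w t \<le> w x"
    and "\<And>x. x \<in> S \<Longrightarrow> t \<le> x \<Longrightarrow> 0 \<le> \<phi> x \<and> w x \<le> w t"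
  shows "integral S (\<lambda>x. w x * \<phi> x) \<le> w t * integral S \<phi>"
proof -
  have "w x * \<phi> x \<le> w t * \<phi> x" if "x \<in> S" for x
    using assms(3,4)[OF that] by (cases "x < t") (auto intro: mult_right_mono mult_right_mono_neg)
  then have "integral S (\<lambda>x. w x * \<phi> x) \<le> integral S (\<lambda>x. w t * \<phi> x)"
    using assms(1,2) integrable_on_cmult_left[OF assms(1), of "w t"] by (intro integral_le) auto
  then show ?thesis
    by simp
qed

lemma sq_integrand_affine_eq:
  "sq_integrand b s x * (1 + x - k) = moment_integrand b 0 s x - k * sq_integrand b s x"
proof -
  have "E / P^2 * (P - k) = E / P - k * (E / P^2)" if "P \<noteq> 0" for E P :: real
    using that by (simp add: field_simps power2_eq_square)
  then show ?thesis
    unfolding sq_integrand_def moment_integrand_def by (cases "1 + x = 0") simp_all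
qed

lemma sq_integrand_affine_integrable:
  assumes "0 < b" and "0 < s"
  shows "(\<lambda>x. sq_integrand b s x * (1 + x - k)) integrable_on {0..}"
  unfolding sq_integrand_affine_eq
  using moment_integrand_integrable[OF assms] integrable_on_cmult_left[OF sq_integrand_integrable[OF assms]]
  by (intro integrable_diff) auto

lemma moment0_minus_moment1_eq_integral:
  assumes b: "0 < b" and s: "0 < s"
  shows "moment b 0 s - L * moment b 1 s
    = integral {0..} (\<lambda>x. sq_integrand b s x * (1 + x - L / (b * s)))"
proof -
  have "integral {0..} (\<lambda>x. sq_integrand b s x * (1 + x - L / (b * s)))
      = moment b 0 s - L / (b * s) * sq_moment b s"
    unfolding sq_integrand_affine_eq
    using moment_integrand_integrable[OF b s]
      integrable_on_cmult_left[OF sq_integrand_integrable[OF b s], of "L / (b * s)"]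
    by (subst integral_diff) (auto simp: moment_def sq_moment_def)
  also have "\<dots> = moment b 0 s - L * moment b 1 s"
    using sq_moment_eq_moment1[OF b s] b s by simp
  finally show ?thesis ..
qed

lemma crossing_point_strict_mono:
  fixes b c L1 L2 :: real
  assumes "0 < b" and "0 < c" and "0 < L1" and "L1 < L2"
  shows "L1 / (b * (L1 + c)) < L2 / (b * (L2 + c))"
proof -
  have "L1 / (L1 + c) / b < L2 / (L2 + c) / b"
    using assms by (intro divide_strict_right_mono) (simp_all add: field_simps)
  then show ?thesis
    by (simp add: mult.commute)
qed

lemma utility_deriv_1_neg_after_nonpos:
  assumes b: "0 < b" and c: "0 < c" and L1: "0 < L1" and L12: "L1 < L2"
    and nonpos: "utility_deriv b c 1 L1 \<le> 0"
  shows "utility_deriv b c 1 L2 < 0"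
proof -
  define s1 s2 where "s1 = L1 + c" and "s2 = L2 + c"
  define k1 k2 where "k1 = L1 / (b * s1)" and "k2 = L2 / (b * s2)"
  define \<phi> where "\<phi> x = sq_integrand b s1 x * (1 + x - k1)" for x
  define w where "w x = exp (- (s2 - s1) * x powr b)" for x
  define t where "t = max 0 (k1 - 1)"
  have s: "0 < s1" "s1 < s2"
    using c L1 L12 by (auto simp: s1_def s2_def)
  have "k1 < k2"
    unfolding k1_def k2_def s1_def s2_def using b c L1 L12 by (rule crossing_point_strict_mono)
  have w_\<phi>: "w x * \<phi> x = sq_integrand b s2 x * (1 + x - k1)" for x
    unfolding w_def \<phi>_def sq_integrand_def by (simp add: exp_add[symmetric] algebra_simps)
  have "utility_deriv b c 1 L2 = moment b 0 s2 - L2 * moment b 1 s2"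
    unfolding s2_def by (rule utility_deriv_1)
  also have "\<dots> = integral {0..} (\<lambda>x. sq_integrand b s2 x * (1 + x - k2))"
    unfolding k2_def using s by (intro moment0_minus_moment1_eq_integral[OF b]) auto
  also have "\<dots> = integral {0..} (\<lambda>x. w x * \<phi> x - (k2 - k1) * sq_integrand b s2 x)"
    unfolding w_\<phi> by (simp add: algebra_simps)
  also have "\<dots> = integral {0..} (\<lambda>x. w x * \<phi> x) - (k2 - k1) * sq_moment b s2"
    unfolding w_\<phi> sq_moment_def
    using sq_integrand_affine_integrable[OF b] integrable_on_cmult_left[OF sq_integrand_integrable[OF b]] s
    by (subst integral_diff) auto
  also have "integral {0..} (\<lambda>x. w x * \<phi> x) \<le> w t * integral {0..} \<phi>"
  proof (rule integral_mult_le_at_sign_change)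
    show "\<phi> integrable_on {0..}" "(\<lambda>x. w x * \<phi> x) integrable_on {0..}"
      unfolding w_\<phi> unfolding \<phi>_def using s by (auto intro: sq_integrand_affine_integrable[OF b])
    show "\<phi> x \<le> 0 \<and> w t \<le> w x" if "x \<in> {0..}" "x < t" for x
      using that s b unfolding \<phi>_def w_def t_def
      by (auto simp: sq_integrand_nonneg mult_nonneg_nonpos intro!: powr_mono2)
    show "0 \<le> \<phi> x \<and> w x \<le> w t" if "x \<in> {0..}" "t \<le> x" for x
      using that s b unfolding \<phi>_def w_def t_def
      by (auto simp: sq_integrand_nonneg intro!: powr_mono2)
  qed
  also have "integral {0..} \<phi> = utility_deriv b c 1 L1"
    unfolding \<phi>_def utility_deriv_1 moment0_minus_moment1_eq_integral[OF b s(1)[unfolded s1_def]]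
    by (simp add: s1_def k1_def)
  finally have "utility_deriv b c 1 L2 \<le> w t * utility_deriv b c 1 L1 - (k2 - k1) * sq_moment b s2"
    by simp
  moreover have "w t * utility_deriv b c 1 L1 \<le> 0"
    using nonpos by (simp add: w_def mult_nonneg_nonpos)
  moreover have "0 < (k2 - k1) * sq_moment b s2"
    using \<open>k1 < k2\<close> sq_moment_pos[OF b] s by simp
  ultimately show ?thesis
    by linarith
qed

lemma moment_integrand0_le_1:
  assumes "0 \<le> L" and "0 \<le> x"
  shows "moment_integrand b 0 L x \<le> 1"
proof -
  have "exp (- L * x powr b) \<le> 1"
    using assms by simp
  then show ?thesis
    unfolding moment_integrand_def using assms by (simp add: divide_le_eq_1 del: exp_le_one_iff)
qed

lemma moment_integrand0_le_shift:
  assumes "1 \<le> L" and "0 \<le> x" and "t \<le> x powr b"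
  shows "moment_integrand b 0 L x \<le> exp (- (L - 1) * t) * moment_integrand b 0 1 x"
proof -
  have "exp (- (L - 1) * x powr b) \<le> exp (- (L - 1) * t)"
    using assms by (simp add: mult_left_mono_neg)
  then have "exp (- (L - 1) * x powr b) * exp (- 1 * x powr b) \<le> exp (- (L - 1) * t) * exp (- 1 * x powr b)"
    by (rule mult_right_mono) simp
  then have "exp (- L * x powr b) \<le> exp (- (L - 1) * t) * exp (- 1 * x powr b)"
    by (simp add: exp_add[symmetric] algebra_simps)
  then show ?thesis
    unfolding moment_integrand_def using assms(2) by (simp add: divide_right_mono)
qed

lemma moment0_le_split:
  assumes b: "0 < b" and r: "0 < r" and L: "1 \<le> L"
  shows "moment b 0 L \<le> L powr (- r / b) + exp (- (L - 1) * L powr (- r)) * moment b 0 1"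
proof -
  define \<epsilon> where "\<epsilon> = L powr (- r / b)"
  define K where "K = exp (- (L - 1) * L powr (- r))"
  define ind where "ind x = (if x \<in> {0..\<epsilon>} then 1 else 0 :: real)" for x
  have \<epsilon>: "0 < \<epsilon>" "\<epsilon> powr b = L powr (- r)"
    using L b by (auto simp: \<epsilon>_def powr_powr)
  have ind: "(ind has_integral \<epsilon>) {0..}"
    unfolding ind_def has_integral_restrict_Int using has_integral_const_real[of "1::real" 0 \<epsilon>] \<epsilon>
    by (simp add: Int_absorb2)
  have pointwise: "moment_integrand b 0 L x \<le> ind x + K * moment_integrand b 0 1 x" if x: "0 \<le> x" for x
  proof (cases "x \<le> \<epsilon>")
    case True
    have "0 \<le> K * moment_integrand b 0 1 x"
      using moment_integrand_nonneg[OF x] by (simp add: K_def)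
    then show ?thesis
      using moment_integrand0_le_1[of L x b] True x L by (simp add: ind_def)
  next
    case False
    then have "L powr (- r) \<le> x powr b"
      unfolding \<epsilon>(2)[symmetric] using \<epsilon> b by (intro powr_mono2) auto
    then show ?thesis
      using moment_integrand0_le_shift[OF L x] False by (simp add: ind_def K_def)
  qed
  have K_integrable: "(\<lambda>x. K * moment_integrand b 0 1 x) integrable_on {0..}"
    using integrable_on_cmult_left[OF moment_integrand_integrable[OF b, of 1 0], of K] by simp
  have "moment b 0 L \<le> integral {0..} (\<lambda>x. ind x + K * moment_integrand b 0 1 x)"
    unfolding moment_def using pointwise ind K_integrable moment_integrand_integrable[OF b] L
    by (intro integral_le integrable_add) auto
  also have "\<dots> = \<epsilon> + K * moment b 0 1"
    unfolding moment_def using ind K_integrable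
    by (simp add: integral_add integral_unique has_integral_integrable)
  finally show ?thesis
    unfolding \<epsilon>_def K_def .
qed

lemma utility_tendsto_0_at_top:
  assumes b: "0 < b" "b < 1" and c: "0 \<le> c"
  shows "(utility_deriv b c 0 \<longlongrightarrow> 0) at_top"
proof -
  define r where "r = (b + 1) / 2"
  have r: "0 < r" "b < r" "r < 1"
    using b by (auto simp: r_def)
  define bound where "bound L = L * (L powr (- r / b) + exp (- (L - 1) * L powr (- r)) * moment b 0 1)"
    for L
  have "\<forall>\<^sub>F L in at_top. 0 \<le> utility_deriv b c 0 L"
    using b c by (intro eventually_at_top_linorderI[of 1]) (auto simp: utility_deriv_0 moment_nonneg)
  moreover have "\<forall>\<^sub>F L in at_top. utility_deriv b c 0 L \<le> bound L"
  proof (intro eventually_at_top_linorderI[of 1])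
    fix L :: real
    assume L: "1 \<le> L"
    have "moment b 0 (L + c) \<le> moment b 0 L"
      using L c by (intro moment_antimono[OF b(1)]) auto
    also have "\<dots> \<le> L powr (- r / b) + exp (- (L - 1) * L powr (- r)) * moment b 0 1"
      by (rule moment0_le_split[OF b(1) r(1) L])
    finally show "utility_deriv b c 0 L \<le> bound L"
      unfolding utility_deriv_0 bound_def using L by (simp add: mult_left_mono)
  qed
  moreover have "(bound \<longlongrightarrow> 0) at_top"
  proof -
    have "1 - r / b < 0"
      using r b by (simp add: field_simps)
    then have "((\<lambda>L. L * L powr (- r / b)) \<longlongrightarrow> 0) at_top"
      by real_asymp
    moreover have "((\<lambda>L. L * exp (- (L - 1) * L powr (- r))) \<longlongrightarrow> 0) at_top"
      using r by real_asymp
    ultimately show ?thesis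
      unfolding bound_def distrib_left
      by (intro tendsto_add_zero) (auto simp: mult.assoc[symmetric] intro: tendsto_mult_left_zero)
  qed
  ultimately show ?thesis
    by (rule tendsto_sandwich[OF _ _ tendsto_const])
qed

lemma utility_tendsto_0_at_right_0:
  assumes "0 < b" and "0 < c"
  shows "(utility_deriv b c 0 \<longlongrightarrow> 0) (at_right 0)"
proof -
  have "isCont (utility_deriv b c 0) 0"
    using utility_deriv_has_derivative[of b 0 c 0] assms by (auto intro: DERIV_isCont)
  then show ?thesis
    by (simp add: isCont_def utility_deriv_0 filterlim_at_split)
qed

lemma smooth_on_real_imp_continuous_on:
  assumes "smooth_on_real S f"
  shows "continuous_on S f"
proof -
  obtain D where "D 0 = f" and "\<forall>n. \<forall>x\<in>S. (D n has_real_derivative D (Suc n) x) (at x)"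
    using assms unfolding smooth_on_real_def by blast
  then show ?thesis
    by (metis DERIV_isCont continuous_at_imp_continuous_on)
qed

lemma vanishing_at_ends_attains_sup:
  fixes g :: "real \<Rightarrow> real"
  assumes cont: "continuous_on {0<..} g"
    and at_0: "(g \<longlongrightarrow> 0) (at_right 0)" and at_infinity: "(g \<longlongrightarrow> 0) at_top"
    and p: "0 < p" "0 < g p"
  shows "\<exists>x>0. \<forall>L>0. g L \<le> g x"
proof -
  obtain a where a: "0 < a" "\<And>L. 0 < L \<Longrightarrow> L < a \<Longrightarrow> g L < g p"
    using order_tendstoD(2)[OF at_0 p(2)] unfolding eventually_at_right_field by blast
  obtain B where B: "\<And>L. B \<le> L \<Longrightarrow> g L < g p"
    using order_tendstoD(2)[OF at_infinity p(2)] unfolding eventually_at_top_linorder by blast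
  define I where "I = {min a p..max B p}"
  have "I \<subseteq> {0<..}"
    using a p by (auto simp: I_def)
  then have "continuous_on I g" and "I \<noteq> {}"
    by (auto simp: I_def intro: continuous_on_subset[OF cont])
  then obtain x where x: "x \<in> I" "\<forall>y\<in>I. g y \<le> g x"
    using continuous_attains_sup[of I g] by (auto simp: I_def)
  have "p \<in> I"
    by (simp add: I_def)
  then have "g p \<le> g x"
    using x by blast
  have "g L \<le> g x" if "0 < L" for L
  proof (cases "L \<in> I")
    case False
    then have "L < a \<or> B \<le> L"
      by (auto simp: I_def)
    then show ?thesis
      using a B that \<open>g p \<le> g x\<close> by (meson less_le_trans less_imp_le)
  qed (use x in blast)
  moreover have "0 < x"
    using x(1) a p by (auto simp: I_def)
  ultimately show ?thesis
    by blast
qed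

lemma maximizer_unique_if_deriv_single_crossing:
  fixes g g' :: "real \<Rightarrow> real"
  assumes deriv: "\<And>x. 0 < x \<Longrightarrow> (g has_real_derivative g' x) (at x)"
    and crossing: "\<And>x y. 0 < x \<Longrightarrow> x < y \<Longrightarrow> g' x \<le> 0 \<Longrightarrow> g' y < 0"
    and p: "0 < p" "\<forall>L>0. g L \<le> g p" and q: "0 < q" "\<forall>L>0. g L \<le> g q"
  shows "p = q"
proof -
  have False if x: "0 < x" "\<forall>L>0. g L \<le> g x" and xy: "x < y" "g x \<le> g y" for x y
  proof -
    have "g' x = 0"
      using x by (intro DERIV_local_max[OF deriv[OF x(1)] x(1)]) auto
    moreover obtain z where z: "x < z" "z < y" "g y - g x = (y - x) * g' z"
      using MVT2[OF xy(1), of g g'] deriv x(1) by force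
    ultimately have "g' z < 0"
      using crossing x(1) by auto
    then have "(y - x) * g' z < 0"
      using xy by (simp add: mult_pos_neg)
    then show False
      using z xy by linarith
  qed
  then show ?thesis
    using p q by (metis linorder_neqE_linordered_idom)
qed

lemma utility_smooth:
  assumes "0 < b" and "0 \<le> c"
  shows "smooth_on_real {0<..} (utility_deriv b c 0)"
  unfolding smooth_on_real_def using utility_deriv_has_derivative[OF assms(1)] assms(2)
  by (intro exI[of _ "utility_deriv b c"]) auto

lemma utility_has_max:
  assumes b: "0 < b" "b < 1" and c: "0 < c"
  shows "\<exists>x>0. \<forall>L>0. utility_deriv b c 0 L \<le> utility_deriv b c 0 x"
proof (rule vanishing_at_ends_attains_sup[of _ 1])
  show "continuous_on {0<..} (utility_deriv b c 0)"
    using utility_smooth[OF b(1)] c by (intro smooth_on_real_imp_continuous_on) auto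
  have "0 < moment b 0 (1 + c)"
    using sq_moment_pos[OF b(1), of "1 + c"] sq_moment_le_moment0[OF b(1), of "1 + c"] c by linarith
  then show "0 < utility_deriv b c 0 1"
    by (simp add: utility_deriv_0)
qed (use utility_tendsto_0_at_right_0[OF b(1) c] utility_tendsto_0_at_top[OF b] c in auto)

lemma utility_max_unique:
  assumes "0 < b" and "0 < c"
    and "0 < p" "\<forall>L>0. utility_deriv b c 0 L \<le> utility_deriv b c 0 p"
    and "0 < q" "\<forall>L>0. utility_deriv b c 0 L \<le> utility_deriv b c 0 q"
  shows "p = q"
  using assms utility_deriv_has_derivative[OF assms(1)] utility_deriv_1_neg_after_nonpos[OF assms(1,2)]
  by (intro maximizer_unique_if_deriv_single_crossing[of "utility_deriv b c 0" "utility_deriv b c 1"])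
    auto

lemma U_eq_utility_deriv:
  assumes "i \<in> {1, 2}"
  shows "(if i = 1 then U \<alpha> i L Lj else U \<alpha> i Lj L) = utility_deriv (2 / \<alpha>) Lj 0 L"
  unfolding U_def utility_deriv_0 moment_def moment_integrand_def
  using assms by (auto simp: add.commute)

theorem lemma2:
  fixes \<alpha> Lj :: real and i j :: nat
  assumes "\<alpha> > 2" and "i \<in> {1, 2}" and "j \<in> {1, 2}" and "j \<noteq> i" and "Lj > 0"
  defines "f \<equiv> (\<lambda>L. if i = 1 then U \<alpha> i L Lj else U \<alpha> i Lj L)"
  shows "smooth_on_real {0<..} f \<and> continuous_on {0<..} f \<and>
         (\<exists>!Lstar. Lstar > 0 \<and> (\<forall>L>0. f L \<le> f Lstar))"
proof -
  define b where "b = 2 / \<alpha>"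
  have b: "0 < b" "b < 1"
    using assms(1) by (auto simp: b_def field_simps)
  have f_eq: "f = utility_deriv b Lj 0"
    using U_eq_utility_deriv[OF assms(2)] by (auto simp: f_def b_def)
  have smooth: "smooth_on_real {0<..} f"
    unfolding f_eq using utility_smooth[OF b(1)] assms(5) by simp
  moreover have "\<exists>!Lstar. Lstar > 0 \<and> (\<forall>L>0. f L \<le> f Lstar)"
    unfolding f_eq using utility_has_max[OF b assms(5)] utility_max_unique[OF b(1) assms(5)] by blast
  ultimately show ?thesis
    using smooth_on_real_imp_continuous_on by blast
qed

end
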